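(* Let $V$ be a finite set with positive element weights ($\vert A \vert$ = total weight of $A \subseteq V$), and let $\mathcal{P}, \mathcal{P}'$ be partitions of $V$ into nonempty parts with $\vert \mathcal{P}' \vert \ge 2$. Define $\phi^* : 2^{\mathcal{P}} \to \mathbb{R}_{\ge 0}$ by $\phi^*(\mathcal{S}) = 0$ if $\mathcal{S} \in \{\emptyset, \mathcal{P}\}$ and $\phi^*(\mathcal{S}) = \min_{\emptyset \ne \mathcal{S}' \subsetneq \mathcal{P}'} \vert U_{\mathcal{S}} \triangle U_{\mathcal{S}'} \vert$ otherwise. Then $\phi^*$ is symmetric, i.e. $\phi^*(\mathcal{S}) = \phi^*(\mathcal{P} \setminus \mathcal{S})$ for all $\mathcal{S} \subseteq \mathcal{P}$; and $\phi^*$ is not submodular in general, i.e. there exist $V$, $\mathcal{P}$, $\mathcal{P}'$ and $\mathcal{S}, \mathcal{T} \subseteq \mathcal{P}$ with $\phi^*(\mathcal{S} \cup \mathcal{T}) > \phi^*(\mathcal{S}) + \phi^*(\mathcal{T}) - \phi^*(\mathcal{S} \cap \mathcal{T})$.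
   Context: $U_{\mathcal{S}}$ denotes the union of the sets in $\mathcal{S}$; $\triangle$ is symmetric difference. *)

theory Defs
  imports Complex_Main "HOL-Library.Disjoint_Sets"
begin

definition wt :: "('a \<Rightarrow> real) \<Rightarrow> 'a set \<Rightarrow> real" where
  "wt w A = (\<Sum>x\<in>A. w x)"

definition symdiff :: "'a set \<Rightarrow> 'a set \<Rightarrow> 'a set" where
  "symdiff A B = (A - B) \<union> (B - A)"

definition phi_star :: "('a \<Rightarrow> real) \<Rightarrow> 'a set set \<Rightarrow> 'a set set \<Rightarrow> 'a set set \<Rightarrow> real" where
  "phi_star w P P' S =
     (if S = {} \<or> S = P then 0
      else Min {wt w (symdiff (\<Union>S) (\<Union>S')) | S'. S' \<noteq> {} \<and> S' \<subset> P'})"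

definition setting :: "'a set \<Rightarrow> ('a \<Rightarrow> real) \<Rightarrow> 'a set set \<Rightarrow> 'a set set \<Rightarrow> bool" where
  "setting V w P P' \<longleftrightarrow> finite V \<and> (\<forall>x\<in>V. w x > 0) \<and>
     partition_on V P \<and> partition_on V P' \<and> card P' \<ge> 2"

end

theory Submission
  imports Defs
begin

text \<open>Symmetry: complementation in \<open>V\<close> preserves symmetric differences, and
  \<open>\<S> \<mapsto> \<P> - \<S>\<close>, \<open>\<S>' \<mapsto> \<P>' - \<S>'\<close> complement the unions inside \<open>V\<close> while permuting the
  nonempty proper subfamilies of \<open>\<P>'\<close>; so both sides minimise the same set of weights.
  Non-submodularity: with \<open>V = {0,1,2}\<close>, weights \<open>1,1,2\<close>, \<open>\<P>\<close> the singletons and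
  \<open>\<P>' = {{0},{1,2}}\<close>, the families \<open>\<S> = {{2}}\<close>, \<open>\<T> = {{0}}\<close> give
  \<open>\<phi>*(\<S> \<union> \<T>) = 2 > 1 = \<phi>*(\<S>) + \<phi>*(\<T>) - \<phi>*(\<S> \<inter> \<T>)\<close>.\<close>

lemma Union_Diff_partition_on:
  assumes "partition_on V P" "S \<subseteq> P"
  shows "\<Union>(P - S) = V - \<Union>S"
  using diff_Union_pairwise_disjoint[OF partition_onD2[OF assms(1)] assms(2)]
    partition_onD1[OF assms(1)] by simp

lemma symdiff_Diff_left:
  assumes "A \<subseteq> V" "B \<subseteq> V"
  shows "symdiff (V - A) B = symdiff A (V - B)"
  using assms by (auto simp: symdiff_def)

lemma Diff_image_nonempty_psubsets:
  "(\<lambda>S'. P - S') ` {S'. S' \<noteq> {} \<and> S' \<subset> P} = {S'. S' \<noteq> {} \<and> S' \<subset> P}"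
    (is "_ ` ?N = ?N")
proof (intro subset_antisym subsetI)
  fix X assume "X \<in> (\<lambda>S'. P - S') ` ?N"
  then show "X \<in> ?N" by blast
next
  fix X assume "X \<in> ?N"
  then have "X = P - (P - X)" "P - X \<in> ?N" by auto
  then show "X \<in> (\<lambda>S'. P - S') ` ?N" by blast
qed

lemma phi_star_Diff:
  assumes "partition_on V P" "partition_on V P'" "S \<subseteq> P"
  shows "phi_star w P P' (P - S) = phi_star w P P' S"
proof (cases "S = {} \<or> S = P")
  case True
  then show ?thesis by (auto simp: phi_star_def)
next
  case False
  then have "P - S \<noteq> {}" "P - S \<noteq> P" using assms(3) by auto
  let ?wts = "\<lambda>A. {wt w (symdiff A (\<Union>S')) | S'. S' \<noteq> {} \<and> S' \<subset> P'}"
  have "?wts (\<Union>(P - S))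
      = (\<lambda>S'. wt w (symdiff (\<Union>(P - S)) (\<Union>S'))) ` {S'. S' \<noteq> {} \<and> S' \<subset> P'}"
    by blast
  also have "\<dots> = (\<lambda>S'. wt w (symdiff (\<Union>S) (\<Union>(P' - S')))) ` {S'. S' \<noteq> {} \<and> S' \<subset> P'}"
  proof (rule image_cong)
    fix S' assume "S' \<in> {S'. S' \<noteq> {} \<and> S' \<subset> P'}"
    then have "S' \<subseteq> P'" by blast
    moreover have "\<Union>S \<subseteq> V" "\<Union>S' \<subseteq> V"
      using assms \<open>S' \<subseteq> P'\<close> by (auto dest: partition_onD1)
    ultimately show "wt w (symdiff (\<Union>(P - S)) (\<Union>S')) = wt w (symdiff (\<Union>S) (\<Union>(P' - S')))"
      using assms by (simp add: Union_Diff_partition_on symdiff_Diff_left)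
  qed simp
  also have "\<dots> = (\<lambda>S'. wt w (symdiff (\<Union>S) (\<Union>S'))) `
      (\<lambda>S'. P' - S') ` {S'. S' \<noteq> {} \<and> S' \<subset> P'}"
    by (simp add: image_image)
  also have "\<dots> = ?wts (\<Union>S)"
    by (simp only: Diff_image_nonempty_psubsets) blast
  finally show ?thesis
    using False \<open>P - S \<noteq> {}\<close> \<open>P - S \<noteq> P\<close> by (simp add: phi_star_def)
qed

lemma nonempty_psubsets_doubleton:
  assumes "a \<noteq> b"
  shows "{S'. S' \<noteq> {} \<and> S' \<subset> {a, b}} = {{a}, {b}}"
  using assms by (auto simp: subset_insert_iff subset_singleton_iff)

lemma phi_star_doubleton:
  assumes "a \<noteq> b" "S \<noteq> {}" "S \<noteq> P"
  shows "phi_star w P {a, b} S = min (wt w (symdiff (\<Union>S) a)) (wt w (symdiff (\<Union>S) b))"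
proof -
  have "{wt w (symdiff (\<Union>S) (\<Union>S')) | S'. S' \<noteq> {} \<and> S' \<subset> {a, b}}
      = (\<lambda>S'. wt w (symdiff (\<Union>S) (\<Union>S'))) ` {S'. S' \<noteq> {} \<and> S' \<subset> {a, b}}"
    by auto
  then show ?thesis
    using assms by (simp add: phi_star_def nonempty_psubsets_doubleton)
qed

lemma phi_star_not_submodular:
  defines "w \<equiv> \<lambda>x :: nat. if x = 2 then 2 else (1 :: real)"
    and "P \<equiv> {{0}, {1}, {2}}" and "P' \<equiv> {{0}, {1, 2}}"
  shows "setting {0, 1, 2} w P P'"
    and "phi_star w P P' ({{2}} \<union> {{0}}) = 2"
    and "phi_star w P P' {{2}} = 1"
    and "phi_star w P P' {{0}} = 0"
    and "phi_star w P P' ({{2}} \<inter> {{0}}) = 0"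
proof -
  show "setting {0, 1, 2} w P P'"
    by (auto simp: setting_def w_def P_def P'_def partition_on_def disjoint_def)
  have neq_P: "X \<noteq> P" if "{1} \<notin> X" for X
    using that by (auto simp: P_def)
  have unions: "\<Union>({{2}} \<union> {{0}}) = {2, 0 :: nat}" "\<Union>{{2}} = {2 :: nat}" "\<Union>{{0}} = {0 :: nat}"
    by auto
  have symdiffs: "symdiff {2, 0} {0} = {2 :: nat}" "symdiff {2, 0} {1, 2} = {0, 1 :: nat}"
    "symdiff {2} {0} = {2, 0 :: nat}" "symdiff {2} {1, 2} = {1 :: nat}"
    "symdiff {0} {0} = ({} :: nat set)" "symdiff {0} {1, 2} = {0, 1, 2 :: nat}"
    by (auto simp: symdiff_def)
  have weights: "wt w {2} = 2" "wt w {0, 1} = 2" "wt w {2, 0} = 3" "wt w {1} = 1" "wt w {} = 0"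
    "wt w {0, 1, 2} = 4"
    by (simp_all add: wt_def w_def)
  have "phi_star w P P' ({{2}} \<union> {{0}}) = min 2 2"
    using phi_star_doubleton[of "{0}" "{1, 2}" "{{2}} \<union> {{0}}" P w] neq_P[of "{{2}} \<union> {{0}}"]
    unfolding P'_def unions symdiffs weights by simp
  then show "phi_star w P P' ({{2}} \<union> {{0}}) = 2" by simp
  have "phi_star w P P' {{2}} = min 3 1"
    using phi_star_doubleton[of "{0}" "{1, 2}" "{{2}}" P w] neq_P[of "{{2}}"]
    unfolding P'_def unions symdiffs weights by simp
  then show "phi_star w P P' {{2}} = 1" by simp
  have "phi_star w P P' {{0}} = min 0 4"
    using phi_star_doubleton[of "{0}" "{1, 2}" "{{0}}" P w] neq_P[of "{{0}}"]
    unfolding P'_def unions symdiffs weights by simp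
  then show "phi_star w P P' {{0}} = 0" by simp
  show "phi_star w P P' ({{2}} \<inter> {{0}}) = 0"
    by (simp add: phi_star_def)
qed

theorem proposition8:
  shows "(\<forall>(V :: 'a set) w P P' S. setting V w P P' \<and> S \<subseteq> P \<longrightarrow>
            phi_star w P P' S = phi_star w P P' (P - S))
       \<and> (\<exists>(V :: nat set) w P P' S T. setting V w P P' \<and> S \<subseteq> P \<and> T \<subseteq> P \<and>
            phi_star w P P' (S \<union> T) >
              phi_star w P P' S + phi_star w P P' T - phi_star w P P' (S \<inter> T))"
proof
  show "\<forall>(V :: 'a set) w P P' S. setting V w P P' \<and> S \<subseteq> P \<longrightarrow>
          phi_star w P P' S = phi_star w P P' (P - S)"
    using phi_star_Diff unfolding setting_def by metis
  show "\<exists>(V :: nat set) w P P' S T. setting V w P P' \<and> S \<subseteq> P \<and> T \<subseteq> P \<and>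
          phi_star w P P' (S \<union> T) >
            phi_star w P P' S + phi_star w P P' T - phi_star w P P' (S \<inter> T)"
    using phi_star_not_submodular
    by (intro exI[of _ "{0, 1, 2}"] exI[of _ "\<lambda>x :: nat. if x = 2 then 2 else (1 :: real)"]
        exI[of _ "{{0}, {1}, {2}}"] exI[of _ "{{0}, {1, 2}}"] exI[of _ "{{2}}"] exI[of _ "{{0}}"])
      simp
qed

end
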